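(* Let $1\le\gamma\le2$. Let $\tilde\Phi:\mathbb{R}^N\to\mathbb{R}$ with $\nabla\tilde\Phi\in\Delta_N$, and suppose the full-information GBPA with potential $\tilde\Phi$ is DiffStable($D_{\infty,\gamma}$, $\|\cdot\|_\infty$) at level $\epsilon$, i.e. $D_{\infty,\gamma}(\nabla\tilde\Phi(\sum_{s<t}\ell'_s),\nabla\tilde\Phi(\sum_{s\le t}\ell'_s))\le\epsilon\|\ell'_t\|_\infty$ for all $t$ and all nonnegative loss vectors $\ell'_1,\dots,\ell'_t\in[0,\infty)^N$. In the $N$-armed bandit GBPA with losses $\ell_t\in[0,1]^N$, where $p_t=\nabla\tilde\Phi(\hat L_{t-1})$, $i_t\sim p_t$, $\hat\ell_t=\frac{\ell_{t,i_t}}{p_{t,i_t}}\mathbf{e}_{i_t}$, $\hat L_t=\hat L_{t-1}+\hat\ell_t$ (with $\hat L_0=0$) and $p_{t+1}=\nabla\tilde\Phi(\hat L_t)$, we have for every $t$ \[\langle p_t-p_{t+1},\hat\ell_t\rangle\le\epsilon\,\hat\ell_{t,i_t}^2\,p_{t,i_t}^\gamma.\]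
   Context: $\Delta_N$ is the probability simplex. The Tsallis $\gamma$-logarithm is $\log_\gamma(x)=\log x$ if $\gamma=1$ and $\frac{x^{1-\gamma}-1}{1-\gamma}$ otherwise; for distributions $P,Q$ on $[N]$, $D_{\infty,\gamma}(P,Q)=\sup_{B\subseteq[N]}\log_\gamma P(B)-\log_\gamma Q(B)$. *)

theory Defs
  imports "HOL-Analysis.Analysis"
begin

definition prob_simplex :: "(real^'n::finite) set" where
  "prob_simplex = {p. (\<forall>i. 0 \<le> p $ i) \<and> (\<Sum>i\<in>UNIV. p $ i) = 1}"

definition tsallis_log :: "real \<Rightarrow> real \<Rightarrow> real" where
  "tsallis_log \<gamma> x = (if \<gamma> = 1 then ln x else (x powr (1 - \<gamma>) - 1) / (1 - \<gamma>))"

definition set_prob :: "real^'n::finite \<Rightarrow> 'n set \<Rightarrow> real" where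
  "set_prob P B = (\<Sum>i\<in>B. P $ i)"

text \<open>D_{infinity,gamma}(P,Q) = sup over B of log_gamma P(B) - log_gamma Q(B), extended-real valued.
  Sets with P(B) = 0 contribute -infinity and are omitted; P(B) > 0 = Q(B) contributes +infinity.\<close>
definition D_inf_gamma :: "real \<Rightarrow> real^'n::finite \<Rightarrow> real^'n \<Rightarrow> ereal" where
  "D_inf_gamma \<gamma> P Q =
     (SUP B\<in>{B. 0 < set_prob P B}.
        if set_prob Q B = 0 then \<infinity>
        else ereal (tsallis_log \<gamma> (set_prob P B) - tsallis_log \<gamma> (set_prob Q B)))"

text \<open>Bandit GBPA: g is the gradient of the potential, l t the loss vector at round t (t \<ge> 1),
  I t the arm drawn at round t. bandit_Lhat t is the cumulative loss estimate after round t.\<close>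
fun bandit_Lhat :: "(real^'n::finite \<Rightarrow> real^'n) \<Rightarrow> (nat \<Rightarrow> real^'n) \<Rightarrow> (nat \<Rightarrow> 'n) \<Rightarrow> nat \<Rightarrow> real^'n" where
  "bandit_Lhat g l I 0 = 0"
| "bandit_Lhat g l I (Suc t) = bandit_Lhat g l I t +
     ((l (Suc t) $ I (Suc t)) / (g (bandit_Lhat g l I t) $ I (Suc t))) *\<^sub>R axis (I (Suc t)) 1"

definition bandit_p :: "(real^'n::finite \<Rightarrow> real^'n) \<Rightarrow> (nat \<Rightarrow> real^'n) \<Rightarrow> (nat \<Rightarrow> 'n) \<Rightarrow> nat \<Rightarrow> real^'n" where
  "bandit_p g l I t = g (bandit_Lhat g l I (t - 1))"

definition bandit_lhat :: "(real^'n::finite \<Rightarrow> real^'n) \<Rightarrow> (nat \<Rightarrow> real^'n) \<Rightarrow> (nat \<Rightarrow> 'n) \<Rightarrow> nat \<Rightarrow> real^'n" where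
  "bandit_lhat g l I t = ((l t $ I t) / (bandit_p g l I t $ I t)) *\<^sub>R axis (I t) 1"

end

theory Submission
  imports Defs
begin

text \<open>Only the coordinate i = I t of the loss estimate is nonzero. Stability applied to the
  nonnegative estimated losses, evaluated on the singleton {i} alone, gives
  log_gamma p_i - log_gamma q_i \<le> \<epsilon> lhat_i for p = p_t and q = p_{t+1}; concavity of log_gamma
  (its derivative is x powr -gamma) turns this into p_i - q_i \<le> \<epsilon> lhat_i p_i powr gamma, and
  multiplying by lhat_i \<ge> 0 gives the claim.\<close>

lemma powr_ge_one_plus_linear:
  fixes r a :: real
  assumes "0 < r" and "a \<le> 0"
  shows "1 + a * (r - 1) \<le> r powr a"
proof -
  have "a * (r - 1) \<le> a * ln r"
    using ln_le_minus_one[OF \<open>0 < r\<close>] \<open>a \<le> 0\<close> by (intro mult_left_mono_neg) auto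
  also have "1 + a * ln r \<le> exp (a * ln r)" by simp
  also have "exp (a * ln r) = r powr a" using \<open>0 < r\<close> by (simp add: powr_def)
  finally show ?thesis by linarith
qed

lemma tsallis_log_tangent:
  fixes p q \<gamma> :: real
  assumes p: "0 < p" and q: "0 < q" and \<gamma>: "1 \<le> \<gamma>"
  shows "p - q \<le> p powr \<gamma> * (tsallis_log \<gamma> p - tsallis_log \<gamma> q)"
proof (cases "\<gamma> = 1")
  case True
  have "ln (q / p) \<le> q / p - 1" using p q by (intro ln_le_minus_one) simp
  hence "p * (ln q - ln p) \<le> p * (q / p - 1)" using p q by (simp add: ln_div)
  also have "\<dots> = q - p" using p by (simp add: field_simps)
  finally show ?thesis using True p by (simp add: tsallis_log_def algebra_simps)
next
  case False
  define a where "a = 1 - \<gamma>"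
  have a: "a < 0" using False \<gamma> by (simp add: a_def)
  have p_powr: "p powr \<gamma> * p powr a = p" using p by (simp add: a_def flip: powr_add)
  have "p + a * (q - p) = p * (1 + a * (q / p - 1))" using p by (simp add: field_simps)
  also have "\<dots> \<le> p * (q / p) powr a"
    using p q a by (intro mult_left_mono powr_ge_one_plus_linear) auto
  also have "\<dots> = p powr \<gamma> * p powr a * q powr a / p powr a"
    using p q by (simp add: powr_divide p_powr)
  also have "\<dots> = p powr \<gamma> * q powr a" using p by simp
  finally have "p - p powr \<gamma> * q powr a \<le> a * (p - q)" by (simp add: algebra_simps)
  hence "p - q \<le> (p - p powr \<gamma> * q powr a) / a"
    using a by (simp add: divide_simps mult.commute)
  also have "\<dots> = p powr \<gamma> * (tsallis_log \<gamma> p - tsallis_log \<gamma> q)"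
    using False a p_powr by (simp add: tsallis_log_def a_def[symmetric] field_simps)
  finally show ?thesis .
qed

lemma D_inf_gamma_singleton_bound:
  assumes "D_inf_gamma \<gamma> P Q \<le> ereal e" and "0 < P $ i"
  shows "Q $ i \<noteq> 0" and "tsallis_log \<gamma> (P $ i) - tsallis_log \<gamma> (Q $ i) \<le> e"
proof -
  have "(if set_prob Q {i} = 0 then \<infinity>
      else ereal (tsallis_log \<gamma> (set_prob P {i}) - tsallis_log \<gamma> (set_prob Q {i})))
      \<le> D_inf_gamma \<gamma> P Q"
    unfolding D_inf_gamma_def
    by (rule SUP_upper) (use \<open>0 < P $ i\<close> in \<open>simp add: set_prob_def\<close>)
  then have "(if set_prob Q {i} = 0 then \<infinity>
      else ereal (tsallis_log \<gamma> (set_prob P {i}) - tsallis_log \<gamma> (set_prob Q {i}))) \<le> ereal e"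
    using assms(1) by (rule order_trans)
  then show "Q $ i \<noteq> 0" and "tsallis_log \<gamma> (P $ i) - tsallis_log \<gamma> (Q $ i) \<le> e"
    by (auto simp: set_prob_def split: if_splits)
qed

lemma infnorm_scaled_axis:
  "infnorm (c *\<^sub>R axis i 1 :: real^'n::finite) = \<bar>c\<bar>"
proof -
  have "infnorm (axis i 1 :: real^'n) \<le> 1"
    using infnorm_le_norm[of "axis i 1 :: real^'n"] by simp
  moreover have "1 \<le> infnorm (axis i 1 :: real^'n)"
    using component_le_infnorm_cart[of "axis i 1 :: real^'n" i] by simp
  ultimately show ?thesis by (simp add: infnorm_mul)
qed

lemma bandit_Lhat_eq_sum: "bandit_Lhat g l I t = (\<Sum>s\<in>{1..t}. bandit_lhat g l I s)"
  by (induction t) (simp_all add: sum.cl_ivl_Suc bandit_lhat_def bandit_p_def)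

lemma bandit_p_eq_g_sum:
  assumes "1 \<le> t"
  shows "bandit_p g l I t = g (\<Sum>s\<in>{1..<t}. bandit_lhat g l I s)"
    and "bandit_p g l I (t + 1) = g (\<Sum>s\<in>{1..t}. bandit_lhat g l I s)"
proof -
  have "{1..<t} = {1..t - 1}" using assms by auto
  then show "bandit_p g l I t = g (\<Sum>s\<in>{1..<t}. bandit_lhat g l I s)"
    by (simp add: bandit_p_def bandit_Lhat_eq_sum)
qed (simp add: bandit_p_def bandit_Lhat_eq_sum)

lemma bandit_lhat_nonneg:
  assumes "0 \<le> l s $ I s" and "0 < bandit_p g l I s $ I s"
  shows "0 \<le> bandit_lhat g l I s $ j"
  using assms by (simp add: bandit_lhat_def axis_def)

theorem lemma7:
  fixes \<Phi> :: "real^'n::finite \<Rightarrow> real" and g :: "real^'n \<Rightarrow> real^'n"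
    and \<gamma> \<epsilon> :: real and l :: "nat \<Rightarrow> real^'n" and I :: "nat \<Rightarrow> 'n" and t :: nat
  assumes "1 \<le> \<gamma>" and "\<gamma> \<le> 2"
    and grad: "\<forall>x. (\<Phi> has_derivative (\<lambda>h. g x \<bullet> h)) (at x)"
    and simplex: "\<forall>x. g x \<in> prob_simplex"
    and stable: "\<forall>t\<ge>1. \<forall>l' :: nat \<Rightarrow> real^'n. (\<forall>s\<in>{1..t}. \<forall>i. 0 \<le> l' s $ i) \<longrightarrow>
        D_inf_gamma \<gamma> (g (\<Sum>s\<in>{1..<t}. l' s)) (g (\<Sum>s\<in>{1..t}. l' s)) \<le> ereal (\<epsilon> * infnorm (l' t))"
    and losses: "\<forall>s\<in>{1..t}. \<forall>i. 0 \<le> l s $ i \<and> l s $ i \<le> 1"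
    and arms: "\<forall>s\<in>{1..t}. 0 < bandit_p g l I s $ I s"
    and "1 \<le> t"
  shows "(bandit_p g l I t - bandit_p g l I (t + 1)) \<bullet> bandit_lhat g l I t
           \<le> \<epsilon> * (bandit_lhat g l I t $ I t)^2 * (bandit_p g l I t $ I t) powr \<gamma>"
proof -
  define i P Q where "i = I t" and "P = bandit_p g l I t" and "Q = bandit_p g l I (t + 1)"
  define c where "c = l t $ i / P $ i"
  have P_pos: "0 < P $ i" using arms \<open>1 \<le> t\<close> by (auto simp: P_def i_def)
  have c_nonneg: "0 \<le> c" using losses \<open>1 \<le> t\<close> P_pos by (auto simp: c_def)
  have lhat: "bandit_lhat g l I t = c *\<^sub>R axis i 1" by (simp add: bandit_lhat_def c_def i_def P_def)
  have "\<forall>s\<in>{1..t}. \<forall>j. 0 \<le> bandit_lhat g l I s $ j"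
    using losses arms by (auto intro: bandit_lhat_nonneg)
  moreover have "infnorm (bandit_lhat g l I t) = c"
    by (simp add: lhat infnorm_scaled_axis c_nonneg)
  ultimately have "D_inf_gamma \<gamma> P Q \<le> ereal (\<epsilon> * c)"
    using stable \<open>1 \<le> t\<close> unfolding P_def Q_def bandit_p_eq_g_sum[OF \<open>1 \<le> t\<close>] by metis
  note D = D_inf_gamma_singleton_bound[OF this P_pos]
  have "0 \<le> Q $ i" using simplex by (simp add: Q_def bandit_p_def prob_simplex_def)
  with D(1) have "P $ i - Q $ i \<le> P $ i powr \<gamma> * (tsallis_log \<gamma> (P $ i) - tsallis_log \<gamma> (Q $ i))"
    using tsallis_log_tangent P_pos \<open>1 \<le> \<gamma>\<close> by simp
  also have "\<dots> \<le> P $ i powr \<gamma> * (\<epsilon> * c)" using D(2) by (intro mult_left_mono) auto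
  finally have "c * (P $ i - Q $ i) \<le> c * (P $ i powr \<gamma> * (\<epsilon> * c))"
    using c_nonneg by (intro mult_left_mono)
  then show ?thesis
    unfolding P_def[symmetric] Q_def[symmetric] i_def[symmetric]
    by (simp add: lhat inner_axis power2_eq_square algebra_simps)
qed

end
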